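(* If $\Lambda$ is a finite index subgroup of a group $\Gamma$, then $\mathrm{Lit}(\Lambda)=\mathrm{Lit}(\Gamma)$.
   Context: $T_1(\Gamma)$ is the space of all $f\colon\Gamma\to\mathbf{C}$ for which there exist $f_1,f_2\colon\Gamma\times\Gamma\to\mathbf{C}$ with $f(x^{-1}y)=f_1(x,y)+f_2(x,y)$ for all $x,y$, $\sup_x\sum_y|f_1(x,y)|<\infty$, $\sup_y\sum_x|f_2(x,y)|<\infty$; $\mathrm{Lit}(\Gamma)=\inf\{p>0:T_1(\Gamma)\subseteq\ell^p(\Gamma)\}\in[0,\infty]$. *)

theory Defs
  imports "HOL-Analysis.Analysis" "HOL-Algebra.Coset"
begin

definition T1 :: "('a, 'b) monoid_scheme \<Rightarrow> ('a \<Rightarrow> complex) set" where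
  "T1 G = {f. \<exists>f1 f2 :: 'a \<Rightarrow> 'a \<Rightarrow> complex.
      (\<forall>x\<in>carrier G. \<forall>y\<in>carrier G. f (inv\<^bsub>G\<^esub> x \<otimes>\<^bsub>G\<^esub> y) = f1 x y + f2 x y) \<and>
      (SUP x\<in>carrier G. (\<Sum>\<^sub>\<infinity> y\<in>carrier G. ennreal (norm (f1 x y)))) < \<infinity> \<and>
      (SUP y\<in>carrier G. (\<Sum>\<^sub>\<infinity> x\<in>carrier G. ennreal (norm (f2 x y)))) < \<infinity>}"

definition lp :: "('a, 'b) monoid_scheme \<Rightarrow> real \<Rightarrow> ('a \<Rightarrow> complex) set" where
  "lp G p = {f. (\<Sum>\<^sub>\<infinity> x\<in>carrier G. ennreal (norm (f x) powr p)) < \<infinity>}"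

definition Lit :: "('a, 'b) monoid_scheme \<Rightarrow> ereal" where
  "Lit G = Inf {ereal p | p. p > 0 \<and> T1 G \<subseteq> lp G p}"

end

(* For every exponent p the inclusions T1 \<subseteq> lp for Lambda and for Gamma are equivalent,
   so the two infima coincide.
   Given f in T1(Lambda), extend it by zero to Gamma: a choice of representatives identifies
   each block {(x, y). y \<in> x Lambda} with Lambda \<times> Lambda, and copying the decomposition of f
   onto every block puts the extension in T1(Gamma).
   Given f in T1(Gamma), every right translate of f is again in T1(Gamma), and restricting it
   to Lambda lands in T1(Lambda); so f is p-summable on each right coset, and finite index
   makes it p-summable on Gamma. *)
theory Submission
  imports Defs "HOL-Algebra.Left_Coset"
begin

definition uniformly_row_summable :: "'a set \<Rightarrow> 'b set \<Rightarrow> ('a \<Rightarrow> 'b \<Rightarrow> complex) \<Rightarrow> bool" where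
  "uniformly_row_summable A B k \<longleftrightarrow> (SUP x\<in>A. \<Sum>\<^sub>\<infinity>y\<in>B. ennreal (norm (k x y))) < \<infinity>"

lemma uniformly_row_summable_dominated:
  assumes "uniformly_row_summable A B k"
    and "\<And>x. x \<in> A' \<Longrightarrow> \<exists>x0\<in>A. (\<Sum>\<^sub>\<infinity>y\<in>B'. ennreal (norm (k' x y))) \<le> (\<Sum>\<^sub>\<infinity>y\<in>B. ennreal (norm (k x0 y)))"
  shows "uniformly_row_summable A' B' k'"
proof -
  have "(SUP x\<in>A'. \<Sum>\<^sub>\<infinity>y\<in>B'. ennreal (norm (k' x y))) \<le> (SUP x\<in>A. \<Sum>\<^sub>\<infinity>y\<in>B. ennreal (norm (k x y)))"
    using assms(2) by (rule SUP_mono)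
  then show ?thesis using assms(1) unfolding uniformly_row_summable_def by (rule le_less_trans)
qed

lemma infsum_ennreal_mono_set:
  fixes u :: "'a \<Rightarrow> ennreal"
  assumes "A \<subseteq> B"
  shows "infsum u A \<le> infsum u B"
  by (rule infsum_mono_neutral) (use assms in \<open>auto intro: nonneg_summable_on_complete\<close>)

lemma T1_iff:
  "f \<in> T1 G \<longleftrightarrow> (\<exists>f1 f2.
      (\<forall>x\<in>carrier G. \<forall>y\<in>carrier G. f (inv\<^bsub>G\<^esub> x \<otimes>\<^bsub>G\<^esub> y) = f1 x y + f2 x y) \<and>
      uniformly_row_summable (carrier G) (carrier G) f1 \<and>
      uniformly_row_summable (carrier G) (carrier G) (\<lambda>y x. f2 x y))"
  unfolding T1_def uniformly_row_summable_def by simp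

context group
begin

lemma T1_subgroup_iff:
  assumes "subgroup H G"
  shows "f \<in> T1 (G\<lparr>carrier := H\<rparr>) \<longleftrightarrow> (\<exists>f1 f2.
      (\<forall>x\<in>H. \<forall>y\<in>H. f (inv x \<otimes> y) = f1 x y + f2 x y) \<and>
      uniformly_row_summable H H f1 \<and> uniformly_row_summable H H (\<lambda>y x. f2 x y))"
proof -
  have "\<forall>x\<in>H. inv\<^bsub>G\<lparr>carrier := H\<rparr>\<^esub> x = inv x"
    using m_inv_consistent[OF assms] by blast
  then show ?thesis unfolding T1_iff by (simp cong: ball_cong)
qed

lemma lp_subgroup_iff_extend_by_zero:
  assumes "subgroup H G"
  shows "f \<in> lp (G\<lparr>carrier := H\<rparr>) p \<longleftrightarrow> (\<lambda>z. if z \<in> H then f z else 0) \<in> lp G p"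
proof -
  have "(\<Sum>\<^sub>\<infinity>z\<in>carrier G. ennreal (norm (if z \<in> H then f z else 0) powr p))
      = (\<Sum>\<^sub>\<infinity>z\<in>H. ennreal (norm (f z) powr p))"
    using subgroup.subset[OF assms] by (intro infsum_cong_neutral) auto
  then show ?thesis unfolding lp_def by simp
qed

lemma infsum_r_coset:
  assumes "subgroup H G" "a \<in> carrier G"
  shows "infsum u (H #> a) = (\<Sum>\<^sub>\<infinity>h\<in>H. u (h \<otimes> a))"
proof -
  have "inj_on (\<lambda>h. h \<otimes> a) H"
    using inj_on_multc[OF assms(2)] subgroup.subset[OF assms(1)] by (rule inj_on_subset)
  moreover have "H #> a = (\<lambda>h. h \<otimes> a) ` H" unfolding r_coset_def by auto
  ultimately show ?thesis by (simp add: infsum_reindex o_def)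
qed

lemma T1_restrict_subgroup:
  assumes H: "subgroup H G" and f: "f \<in> T1 G"
  shows "f \<in> T1 (G\<lparr>carrier := H\<rparr>)"
proof -
  have HG: "H \<subseteq> carrier G" using subgroup.subset[OF H] .
  obtain f1 f2 where dec: "\<forall>x\<in>carrier G. \<forall>y\<in>carrier G. f (inv x \<otimes> y) = f1 x y + f2 x y"
    and b1: "uniformly_row_summable (carrier G) (carrier G) f1"
    and b2: "uniformly_row_summable (carrier G) (carrier G) (\<lambda>y x. f2 x y)"
    using f unfolding T1_iff by blast
  have "uniformly_row_summable H H f1"
    by (rule uniformly_row_summable_dominated[OF b1]) (use HG in \<open>blast intro: infsum_ennreal_mono_set\<close>)
  moreover have "uniformly_row_summable H H (\<lambda>y x. f2 x y)"
    by (rule uniformly_row_summable_dominated[OF b2]) (use HG in \<open>blast intro: infsum_ennreal_mono_set\<close>)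
  ultimately show ?thesis unfolding T1_subgroup_iff[OF H] using dec HG by blast
qed

lemma T1_right_translate:
  assumes f: "f \<in> T1 G" and t: "t \<in> carrier G"
  shows "(\<lambda>z. f (z \<otimes> t)) \<in> T1 G"
proof -
  obtain f1 f2 where dec: "\<forall>x\<in>carrier G. \<forall>y\<in>carrier G. f (inv x \<otimes> y) = f1 x y + f2 x y"
    and b1: "uniformly_row_summable (carrier G) (carrier G) f1"
    and b2: "uniformly_row_summable (carrier G) (carrier G) (\<lambda>y x. f2 x y)"
    using f unfolding T1_iff by blast
  have translate: "(\<Sum>\<^sub>\<infinity>y\<in>carrier G. u (y \<otimes> t)) = infsum u (carrier G)" for u :: "'a \<Rightarrow> ennreal"
    using infsum_r_coset[OF subgroup_self t, of u] subgroup.rcos_const[OF subgroup_self is_group t]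
    by simp
  have "uniformly_row_summable (carrier G) (carrier G) (\<lambda>x y. f1 x (y \<otimes> t))"
  proof (rule uniformly_row_summable_dominated[OF b1])
    fix x assume "x \<in> carrier G"
    then show "\<exists>x0\<in>carrier G. (\<Sum>\<^sub>\<infinity>y\<in>carrier G. ennreal (norm (f1 x (y \<otimes> t))))
        \<le> (\<Sum>\<^sub>\<infinity>y\<in>carrier G. ennreal (norm (f1 x0 y)))"
      using translate[of "\<lambda>y. ennreal (norm (f1 x y))"] by auto
  qed
  moreover have "uniformly_row_summable (carrier G) (carrier G) (\<lambda>y x. f2 x (y \<otimes> t))"
    by (rule uniformly_row_summable_dominated[OF b2]) (use t in auto)
  moreover have "\<forall>x\<in>carrier G. \<forall>y\<in>carrier G. f (inv x \<otimes> y \<otimes> t) = f1 x (y \<otimes> t) + f2 x (y \<otimes> t)"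
    using dec t by (simp add: m_assoc)
  ultimately show ?thesis
    unfolding T1_iff by (intro exI[of _ "\<lambda>x y. f1 x (y \<otimes> t)"] exI[of _ "\<lambda>x y. f2 x (y \<otimes> t)"]) simp
qed

lemma lp_of_finite_index:
  assumes H: "subgroup H G" and fin: "finite (rcosets H)"
    and translates: "\<And>t. t \<in> carrier G \<Longrightarrow> (\<lambda>z. f (z \<otimes> t)) \<in> lp (G\<lparr>carrier := H\<rparr>) p"
  shows "f \<in> lp G p"
proof -
  let ?u = "\<lambda>x. ennreal (norm (f x) powr p)"
  have "infsum ?u (carrier G) = infsum ?u (\<Union>M\<in>rcosets H. M)"
    using rcosets_part_G[OF H] by simp
  also have "\<dots> = (\<Sum>M\<in>rcosets H. infsum ?u M)"
    using rcos_disjoint[OF H]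
    by (intro sum_infsum[symmetric] fin nonneg_summable_on_complete) (auto simp: pairwise_def disjnt_def)
  also have "\<dots> < \<infinity>"
  proof -
    have "infsum ?u (H #> t) < \<infinity>" if "t \<in> carrier G" for t
      using translates[OF that] infsum_r_coset[OF H that, of ?u] by (simp add: lp_def)
    then show ?thesis using fin by (auto simp: RCOSETS_def)
  qed
  finally show ?thesis by (simp add: lp_def)
qed

lemma l_coset_coordinates:
  assumes H: "subgroup H G"
  obtains c where "\<And>x. x \<in> carrier G \<Longrightarrow> bij_betw c (l_coset G x H) H"
    and "\<And>x y. x \<in> carrier G \<Longrightarrow> y \<in> l_coset G x H \<Longrightarrow> inv (c x) \<otimes> c y = inv x \<otimes> y"
proof -
  define rep where "rep x = (SOME r. r \<in> l_coset G x H)" for x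
  have rep: "rep x \<in> carrier G" "l_coset G (rep x) H = l_coset G x H" if "x \<in> carrier G" for x
  proof -
    have "rep x \<in> l_coset G x H"
      unfolding rep_def using lcos_self[OF that H] by (rule someI)
    then show "rep x \<in> carrier G" "l_coset G (rep x) H = l_coset G x H"
      using l_coset_carrier[OF _ that H] l_repr_independence[OF _ that H] by auto
  qed
  have rep_eq: "rep y = rep x" if "x \<in> carrier G" "y \<in> l_coset G x H" for x y
    using l_repr_independence[OF that(2,1) H] by (simp add: rep_def)
  define c where "c x = inv (rep x) \<otimes> x" for x
  show ?thesis
  proof
    fix x assume x: "x \<in> carrier G"
    show "bij_betw c (l_coset G x H) H"
    proof (rule bij_betw_byWitness[where f'="\<lambda>h. rep x \<otimes> h"])
      show "\<forall>y\<in>l_coset G x H. rep x \<otimes> c y = y"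
        using rep_eq[OF x] l_coset_carrier[OF _ x H] rep(1)[OF x] by (simp add: c_def m_assoc[symmetric])
      have "rep x \<otimes> h \<in> l_coset G x H" if "h \<in> H" for h
        using that rep(2)[OF x] unfolding l_coset_def by blast
      then show "\<forall>h\<in>H. c (rep x \<otimes> h) = h" "(\<lambda>h. rep x \<otimes> h) ` H \<subseteq> l_coset G x H"
        using rep_eq[OF x] rep(1)[OF x] subgroup.mem_carrier[OF H]
        by (auto simp: c_def m_assoc[symmetric])
      show "c ` l_coset G x H \<subseteq> H"
        using rep_eq[OF x] rep[OF x] subgroup.lcos_module_imp[OF H is_group rep(1)[OF x]]
        by (auto simp: c_def)
    qed
  next
    fix x y assume "x \<in> carrier G" "y \<in> l_coset G x H"
    then show "inv (c x) \<otimes> c y = inv x \<otimes> y"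
      using rep_eq rep(1) l_coset_carrier[OF _ _ H]
      by (simp add: c_def inv_mult_group m_assoc[symmetric]) (simp add: m_assoc)
  qed
qed

lemma T1_extend_by_zero:
  assumes H: "subgroup H G" and f: "f \<in> T1 (G\<lparr>carrier := H\<rparr>)"
  shows "(\<lambda>z. if z \<in> H then f z else 0) \<in> T1 G"
proof -
  obtain f1 f2 where dec: "\<forall>x\<in>H. \<forall>y\<in>H. f (inv x \<otimes> y) = f1 x y + f2 x y"
    and b1: "uniformly_row_summable H H f1" and b2: "uniformly_row_summable H H (\<lambda>y x. f2 x y)"
    using f unfolding T1_subgroup_iff[OF H] by blast
  obtain c where bij: "\<And>x. x \<in> carrier G \<Longrightarrow> bij_betw c (l_coset G x H) H"
    and c_diff: "\<And>x y. x \<in> carrier G \<Longrightarrow> y \<in> l_coset G x H \<Longrightarrow> inv (c x) \<otimes> c y = inv x \<otimes> y"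
    using l_coset_coordinates[OF H] by blast
  have c_in: "c x \<in> H" if "x \<in> carrier G" for x
    using bij_betwE[OF bij[OF that]] lcos_self[OF that H] by blast
  have row: "(\<Sum>\<^sub>\<infinity>y\<in>carrier G. ennreal (norm (if y \<in> l_coset G x H then k (c x) (c y) else 0)))
      = (\<Sum>\<^sub>\<infinity>h\<in>H. ennreal (norm (k (c x) h)))"
    if x: "x \<in> carrier G" for x and k :: "'a \<Rightarrow> 'a \<Rightarrow> complex"
  proof -
    have "(\<Sum>\<^sub>\<infinity>y\<in>carrier G. ennreal (norm (if y \<in> l_coset G x H then k (c x) (c y) else 0)))
        = (\<Sum>\<^sub>\<infinity>y\<in>l_coset G x H. ennreal (norm (k (c x) (c y))))"
      using l_coset_subset_G[OF subgroup.subset[OF H] x] by (intro infsum_cong_neutral) auto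
    also have "\<dots> = (\<Sum>\<^sub>\<infinity>h\<in>H. ennreal (norm (k (c x) h)))"
      by (rule infsum_reindex_bij_betw[OF bij[OF x]])
    finally show ?thesis .
  qed
  define g1 where "g1 x y = (if y \<in> l_coset G x H then f1 (c x) (c y) else 0)" for x y
  define g2 where "g2 x y = (if x \<in> l_coset G y H then f2 (c x) (c y) else 0)" for x y
  have "(if inv x \<otimes> y \<in> H then f (inv x \<otimes> y) else 0) = g1 x y + g2 x y"
    if "x \<in> carrier G" "y \<in> carrier G" for x y
  proof (cases "y \<in> l_coset G x H")
    case True
    then have "x \<in> l_coset G y H" "inv x \<otimes> y \<in> H"
      using l_coset_swap[OF _ that(1) H] subgroup.lcos_module_imp[OF H is_group that(1)] by auto
    then show ?thesis
      using True dec c_in that c_diff[OF that(1) True, symmetric] by (simp add: g1_def g2_def)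
  next
    case False
    then have "x \<notin> l_coset G y H" "inv x \<otimes> y \<notin> H"
      using l_coset_swap[OF _ that(2) H] subgroup.lcos_module_rev[OF H is_group that] by auto
    then show ?thesis using False by (simp add: g1_def g2_def)
  qed
  moreover have "uniformly_row_summable (carrier G) (carrier G) g1"
    by (rule uniformly_row_summable_dominated[OF b1]) (use row c_in in \<open>auto simp: g1_def\<close>)
  moreover have "uniformly_row_summable (carrier G) (carrier G) (\<lambda>y x. g2 x y)"
  proof (rule uniformly_row_summable_dominated[OF b2])
    fix y assume "y \<in> carrier G"
    then show "\<exists>y0\<in>H. (\<Sum>\<^sub>\<infinity>x\<in>carrier G. ennreal (norm (g2 x y)))
        \<le> (\<Sum>\<^sub>\<infinity>x\<in>H. ennreal (norm (f2 x y0)))"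
      using row[of y "\<lambda>a b. f2 b a"] c_in by (auto simp: g2_def)
  qed
  ultimately show ?thesis unfolding T1_iff by blast
qed

lemma T1_subset_lp_subgroup_iff:
  assumes H: "subgroup H G" and fin: "finite (rcosets H)"
  shows "T1 (G\<lparr>carrier := H\<rparr>) \<subseteq> lp (G\<lparr>carrier := H\<rparr>) p \<longleftrightarrow> T1 G \<subseteq> lp G p"
proof
  assume "T1 (G\<lparr>carrier := H\<rparr>) \<subseteq> lp (G\<lparr>carrier := H\<rparr>) p"
  then show "T1 G \<subseteq> lp G p"
    using lp_of_finite_index[OF H fin] T1_restrict_subgroup[OF H] T1_right_translate by blast
next
  assume "T1 G \<subseteq> lp G p"
  then show "T1 (G\<lparr>carrier := H\<rparr>) \<subseteq> lp (G\<lparr>carrier := H\<rparr>) p"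
    using lp_subgroup_iff_extend_by_zero[OF H] T1_extend_by_zero[OF H] by blast
qed

end

theorem proposition3p6:
  fixes G :: "('a, 'b) monoid_scheme" and H :: "'a set"
  assumes "group G" and "subgroup H G" and "finite (rcosets\<^bsub>G\<^esub> H)"
  shows "Lit (G\<lparr>carrier := H\<rparr>) = Lit G"
  unfolding Lit_def group.T1_subset_lp_subgroup_iff[OF assms] ..

end
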